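(* Let $G=(V,E)$ be a finite Eulerian graph (every vertex has even degree; $G$ need not be connected). For $A\subseteq E$ let $\varepsilon(A)$ denote the number of Eulerian orientations of the graph $(V,A)$ and let $h(A)$ denote the number of half graphs of $(V,A)$. Then $$\varepsilon(G)^2=\sum_{A\subseteq E}\varepsilon(A)\,\varepsilon(E\setminus A)\qquad\text{and}\qquad h(G)^2=\sum_{A\subseteq E}h(A)\,h(E\setminus A),$$ where $\varepsilon(G)=\varepsilon(E)$ and $h(G)=h(E)$.
   Context: An Eulerian orientation of a graph is an orientation of its edges in which every vertex has in-degree equal to its out-degree. A half graph of a graph $F=(V,A)$ is a subset $S\subseteq A$ of edges such that for every vertex $v$ the number of edges of $S$ incident to $v$ equals $d_F(v)/2$, where $d_F(v)$ is the degree of $v$ in $F$. (If some vertex has odd degree in $(V,A)$, then $\varepsilon(A)=h(A)=0$.) *)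

theory Defs
  imports "HOL-Library.FuncSet"
begin

text \<open>Finite multigraphs (multiple edges and loops allowed): an abstract edge set E,
  each edge e having the (unordered) end pair given by the components of ends e.\<close>

definition deg :: "('e \<Rightarrow> 'v \<times> 'v) \<Rightarrow> 'e set \<Rightarrow> 'v \<Rightarrow> nat" where
  "deg ends A v = card {e \<in> A. fst (ends e) = v} + card {e \<in> A. snd (ends e) = v}"

text \<open>An orientation of the edges A: ori e = True means e is directed from fst (ends e)
  to snd (ends e), ori e = False means the reverse.\<close>

definition outdeg :: "('e \<Rightarrow> 'v \<times> 'v) \<Rightarrow> 'e set \<Rightarrow> ('e \<Rightarrow> bool) \<Rightarrow> 'v \<Rightarrow> nat" where
  "outdeg ends A ori v = card {e \<in> A. (ori e \<and> fst (ends e) = v) \<or> (\<not> ori e \<and> snd (ends e) = v)}"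

definition indeg :: "('e \<Rightarrow> 'v \<times> 'v) \<Rightarrow> 'e set \<Rightarrow> ('e \<Rightarrow> bool) \<Rightarrow> 'v \<Rightarrow> nat" where
  "indeg ends A ori v = card {e \<in> A. (ori e \<and> snd (ends e) = v) \<or> (\<not> ori e \<and> fst (ends e) = v)}"

definition eulerian_orientations ::
  "'v set \<Rightarrow> ('e \<Rightarrow> 'v \<times> 'v) \<Rightarrow> 'e set \<Rightarrow> ('e \<Rightarrow> bool) set" where
  "eulerian_orientations V ends A =
     {ori \<in> A \<rightarrow>\<^sub>E (UNIV :: bool set). \<forall>v\<in>V. outdeg ends A ori v = indeg ends A ori v}"

definition num_eul_or :: "'v set \<Rightarrow> ('e \<Rightarrow> 'v \<times> 'v) \<Rightarrow> 'e set \<Rightarrow> nat" where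
  "num_eul_or V ends A = card (eulerian_orientations V ends A)"

definition half_graphs :: "'v set \<Rightarrow> ('e \<Rightarrow> 'v \<times> 'v) \<Rightarrow> 'e set \<Rightarrow> 'e set set" where
  "half_graphs V ends A = {S. S \<subseteq> A \<and> (\<forall>v\<in>V. 2 * deg ends S v = deg ends A v)}"

definition num_half :: "'v set \<Rightarrow> ('e \<Rightarrow> 'v \<times> 'v) \<Rightarrow> 'e set \<Rightarrow> nat" where
  "num_half V ends A = card (half_graphs V ends A)"

end

theory Submission
  imports Defs
begin

text \<open>Both counts are numbers of \<open>\<pm>1\<close>-signings of the edges solving a homogeneous linear
  system with one equation per vertex: the coefficient of an edge at a vertex is its signed
  incidence for Eulerian orientations, and its plain incidence for half graphs (sign \<open>+1\<close> on S,
  \<open>-1\<close> off S). Two signings f, g of E agree on some A \<subseteq> E and are opposite on E - A, so the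
  vertex sums of g are those of f with the E - A part negated; hence f and g both solve the system
  iff f solves the systems on A and on E - A separately. Pairs of solutions on E therefore
  correspond bijectively to triples (A, solution on A, solution on E - A).\<close>

definition sign_bool :: "bool \<Rightarrow> int" where
  "sign_bool b = (if b then 1 else -1)"

definition balanced_on :: "'v set \<Rightarrow> ('e \<Rightarrow> 'v \<Rightarrow> int) \<Rightarrow> 'e set \<Rightarrow> ('e \<Rightarrow> bool) \<Rightarrow> bool" where
  "balanced_on V c A f \<longleftrightarrow> (\<forall>v\<in>V. (\<Sum>e\<in>A. sign_bool (f e) * c e v) = 0)"

definition balanced_signings :: "'v set \<Rightarrow> ('e \<Rightarrow> 'v \<Rightarrow> int) \<Rightarrow> 'e set \<Rightarrow> ('e \<Rightarrow> bool) set" where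
  "balanced_signings V c A = {f \<in> A \<rightarrow>\<^sub>E UNIV. balanced_on V c A f}"

lemma finite_balanced_signings: "finite A \<Longrightarrow> finite (balanced_signings V c A)"
  unfolding balanced_signings_def by (rule finite_subset[of _ "A \<rightarrow>\<^sub>E UNIV"]) (auto intro: finite_PiE)

lemma balanced_on_cong: "(\<And>e. e \<in> A \<Longrightarrow> f e = g e) \<Longrightarrow> balanced_on V c A f = balanced_on V c A g"
  unfolding balanced_on_def by simp

lemma balanced_on_restrict [simp]: "balanced_on V c A (restrict f A) = balanced_on V c A f"
  by (rule balanced_on_cong) simp

lemma balanced_on_agree_disagree_iff:
  assumes "finite E" and "A \<subseteq> E"
    and agree: "\<And>e. e \<in> A \<Longrightarrow> g e = f e"
    and disagree: "\<And>e. e \<in> E - A \<Longrightarrow> g e = (\<not> f e)"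
  shows "balanced_on V c E f \<and> balanced_on V c E g \<longleftrightarrow>
         balanced_on V c A f \<and> balanced_on V c (E - A) f"
proof -
  have "(\<Sum>e\<in>E. sign_bool (f e) * c e v) = 0 \<and> (\<Sum>e\<in>E. sign_bool (g e) * c e v) = 0 \<longleftrightarrow>
        (\<Sum>e\<in>A. sign_bool (f e) * c e v) = 0 \<and> (\<Sum>e\<in>E - A. sign_bool (f e) * c e v) = 0" for v
  proof -
    let ?sA = "\<Sum>e\<in>A. sign_bool (f e) * c e v" and ?sB = "\<Sum>e\<in>E - A. sign_bool (f e) * c e v"
    have sum_split: "(\<Sum>e\<in>E. h e) = (\<Sum>e\<in>A. h e) + (\<Sum>e\<in>E - A. h e)" for h :: "_ \<Rightarrow> int"
      using assms(1,2) by (metis add.commute sum.subset_diff)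
    have "(\<Sum>e\<in>A. sign_bool (g e) * c e v) = ?sA"
      using agree by simp
    moreover have "(\<Sum>e\<in>E - A. sign_bool (g e) * c e v) = - ?sB"
      unfolding sum_negf[symmetric] by (rule sum.cong) (auto simp: disagree sign_bool_def)
    ultimately have "(\<Sum>e\<in>E. sign_bool (g e) * c e v) = ?sA - ?sB"
      by (simp add: sum_split)
    moreover have "(\<Sum>e\<in>E. sign_bool (f e) * c e v) = ?sA + ?sB"
      by (rule sum_split)
    ultimately show ?thesis by linarith
  qed
  then show ?thesis unfolding balanced_on_def by blast
qed

lemma restrict_agreement_balanced_signings:
  assumes "finite E" and f: "f \<in> balanced_signings V c E" and g: "g \<in> balanced_signings V c E"
  defines "A \<equiv> {e\<in>E. f e = g e}"
  shows "restrict f A \<in> balanced_signings V c A \<and> restrict f (E - A) \<in> balanced_signings V c (E - A)"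
proof -
  have "A \<subseteq> E" by (auto simp: A_def)
  have "balanced_on V c A f \<and> balanced_on V c (E - A) f"
  proof (rule balanced_on_agree_disagree_iff[OF assms(1) \<open>A \<subseteq> E\<close>, THEN iffD1])
    show "g e = f e" if "e \<in> A" for e using that by (simp add: A_def)
    show "g e = (\<not> f e)" if "e \<in> E - A" for e using that by (auto simp: A_def)
    show "balanced_on V c E f \<and> balanced_on V c E g"
      using f g by (simp add: balanced_signings_def)
  qed
  then show ?thesis by (simp add: balanced_signings_def)
qed

lemma merge_balanced_signings:
  assumes "finite E" and "A \<subseteq> E"
    and a: "a \<in> balanced_signings V c A" and b: "b \<in> balanced_signings V c (E - A)"
  shows "restrict (\<lambda>e. if e \<in> A then a e else b e) E \<in> balanced_signings V c E"
    and "restrict (\<lambda>e. if e \<in> A then a e else \<not> b e) E \<in> balanced_signings V c E"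
proof -
  let ?f = "restrict (\<lambda>e. if e \<in> A then a e else b e) E"
  let ?g = "restrict (\<lambda>e. if e \<in> A then a e else \<not> b e) E"
  have "balanced_on V c E ?f \<and> balanced_on V c E ?g"
  proof (rule balanced_on_agree_disagree_iff[OF assms(1,2), THEN iffD2])
    show "?g e = ?f e" if "e \<in> A" for e using that \<open>A \<subseteq> E\<close> by auto
    show "?g e = (\<not> ?f e)" if "e \<in> E - A" for e using that by auto
    have "balanced_on V c A ?f = balanced_on V c A a"
      by (rule balanced_on_cong) (use \<open>A \<subseteq> E\<close> in auto)
    moreover have "balanced_on V c (E - A) ?f = balanced_on V c (E - A) b"
      by (rule balanced_on_cong) auto
    ultimately show "balanced_on V c A ?f \<and> balanced_on V c (E - A) ?f"
      using a b by (simp add: balanced_signings_def)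
  qed
  then show "?f \<in> balanced_signings V c E" and "?g \<in> balanced_signings V c E"
    by (simp_all add: balanced_signings_def)
qed

lemma card_balanced_signings_square:
  fixes E :: "'e set"
  assumes "finite E"
  shows "card (balanced_signings V c E)^2 =
    (\<Sum>A\<in>Pow E. card (balanced_signings V c A) * card (balanced_signings V c (E - A)))"
proof -
  let ?B = "balanced_signings V c"
  let ?S = "SIGMA A:Pow E. ?B A \<times> ?B (E - A)"
  define separate where "separate = (\<lambda>(f :: 'e \<Rightarrow> bool, g). let A = {e\<in>E. f e = g e} in
      (A, restrict f A, restrict f (E - A)))"
  define merge where "merge = (\<lambda>(A, a :: 'e \<Rightarrow> bool, b).
      (restrict (\<lambda>e. if e \<in> A then a e else b e) E,
       restrict (\<lambda>e. if e \<in> A then a e else \<not> b e) E))"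
  have "bij_betw separate (?B E \<times> ?B E) ?S"
  proof (rule bij_betw_byWitness[where f' = merge])
    show "\<forall>p\<in>?B E \<times> ?B E. merge (separate p) = p"
    proof clarify
      fix f g assume "f \<in> ?B E" and "g \<in> ?B E"
      then have "f \<in> E \<rightarrow>\<^sub>E UNIV" and "g \<in> E \<rightarrow>\<^sub>E UNIV"
        by (auto simp: balanced_signings_def)
      then show "merge (separate (f, g)) = (f, g)"
        by (auto simp: separate_def merge_def Let_def fun_eq_iff PiE_def extensional_def)
    qed
    show "\<forall>q\<in>?S. separate (merge q) = q"
    proof
      fix q assume "q \<in> ?S"
      then obtain A a b where q: "q = (A, a, b)" and "A \<subseteq> E"
        and "a \<in> A \<rightarrow>\<^sub>E UNIV" and "b \<in> (E - A) \<rightarrow>\<^sub>E UNIV"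
        by (auto simp: balanced_signings_def)
      moreover from \<open>A \<subseteq> E\<close> have "{e \<in> E. restrict (\<lambda>e. if e \<in> A then a e else b e) E e =
          restrict (\<lambda>e. if e \<in> A then a e else \<not> b e) E e} = A"
        by auto
      ultimately show "separate (merge q) = q"
        by (auto simp: separate_def merge_def Let_def fun_eq_iff PiE_def extensional_def)
    qed
    show "separate ` (?B E \<times> ?B E) \<subseteq> ?S"
      using restrict_agreement_balanced_signings[OF assms]
      by (auto simp: separate_def Let_def)
    show "merge ` ?S \<subseteq> ?B E \<times> ?B E"
    proof (rule image_subsetI)
      fix q assume "q \<in> ?S"
      then obtain A a b where q: "q = (A, a, b)" and "A \<subseteq> E" and "a \<in> ?B A" and "b \<in> ?B (E - A)"
        by blast
      then show "merge q \<in> ?B E \<times> ?B E"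
        unfolding q merge_def prod.case using merge_balanced_signings[OF assms] by blast
    qed
  qed
  then have "card (?B E \<times> ?B E) = card ?S"
    by (rule bij_betw_same_card)
  also have "card ?S = (\<Sum>A\<in>Pow E. card (?B A \<times> ?B (E - A)))"
    using assms by (intro card_SigmaI) (auto intro: finite_balanced_signings dest: finite_subset)
  finally show ?thesis
    by (simp add: power2_eq_square card_cartesian_product)
qed

definition incidence :: "('e \<Rightarrow> 'v \<times> 'v) \<Rightarrow> 'e \<Rightarrow> 'v \<Rightarrow> int" where
  "incidence ends e v = of_bool (fst (ends e) = v) + of_bool (snd (ends e) = v)"

definition signed_incidence :: "('e \<Rightarrow> 'v \<times> 'v) \<Rightarrow> 'e \<Rightarrow> 'v \<Rightarrow> int" where
  "signed_incidence ends e v = of_bool (fst (ends e) = v) - of_bool (snd (ends e) = v)"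

lemma of_nat_card_filter: "finite A \<Longrightarrow> of_nat (card {e\<in>A. P e}) = (\<Sum>e\<in>A. of_bool (P e))"
  by (simp add: Int_def)

lemma of_nat_deg: "finite S \<Longrightarrow> int (deg ends S v) = (\<Sum>e\<in>S. incidence ends e v)"
  by (simp add: deg_def incidence_def of_nat_card_filter sum.distrib)

lemma outdeg_minus_indeg:
  "finite A \<Longrightarrow> int (outdeg ends A ori v) - int (indeg ends A ori v) =
     (\<Sum>e\<in>A. sign_bool (ori e) * signed_incidence ends e v)"
  unfolding outdeg_def indeg_def of_nat_card_filter sum_subtractf[symmetric]
  by (rule sum.cong) (auto simp: sign_bool_def signed_incidence_def)

lemma eulerian_orientations_eq_balanced_signings:
  "finite A \<Longrightarrow> eulerian_orientations V ends A = balanced_signings V (signed_incidence ends) A"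
  unfolding eulerian_orientations_def balanced_signings_def balanced_on_def
  by (simp flip: outdeg_minus_indeg)

lemma twice_deg_minus_deg:
  assumes "finite A" and "S \<subseteq> A"
  shows "2 * int (deg ends S v) - int (deg ends A v) =
    (\<Sum>e\<in>A. sign_bool (e \<in> S) * incidence ends e v)"
proof -
  have "2 * int (deg ends S v) - int (deg ends A v) =
      2 * (\<Sum>e\<in>A. of_bool (e \<in> S) * incidence ends e v) - (\<Sum>e\<in>A. incidence ends e v)"
    using assms finite_subset[OF assms(2,1)] by (simp add: of_nat_deg Int_absorb1)
  also have "\<dots> = (\<Sum>e\<in>A. sign_bool (e \<in> S) * incidence ends e v)"
    unfolding sum_distrib_left sum_subtractf[symmetric]
    by (rule sum.cong) (auto simp: sign_bool_def)
  finally show ?thesis .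
qed

lemma card_half_graphs_eq_balanced_signings:
  assumes "finite A"
  shows "num_half V ends A = card (balanced_signings V (incidence ends) A)"
proof -
  have half_iff: "S \<in> half_graphs V ends A \<longleftrightarrow>
      S \<subseteq> A \<and> balanced_on V (incidence ends) A (\<lambda>e. e \<in> S)" for S
  proof -
    have "2 * deg ends S v = deg ends A v \<longleftrightarrow>
        (\<Sum>e\<in>A. sign_bool (e \<in> S) * incidence ends e v) = 0" if "S \<subseteq> A" for v
      using twice_deg_minus_deg[OF assms that, of ends v] by linarith
    then show ?thesis
      unfolding half_graphs_def balanced_on_def by auto
  qed
  have "bij_betw (\<lambda>S. restrict (\<lambda>e. e \<in> S) A) (half_graphs V ends A)
      (balanced_signings V (incidence ends) A)"
    by (rule bij_betw_byWitness[where f' = "\<lambda>f. {e\<in>A. f e}"])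
      (auto simp: half_iff balanced_signings_def fun_eq_iff PiE_def extensional_def
        cong: balanced_on_cong)
  then show ?thesis
    unfolding num_half_def by (rule bij_betw_same_card)
qed

theorem theorem1p1:
  fixes V :: "'v set" and E :: "'e set" and ends :: "'e \<Rightarrow> 'v \<times> 'v"
  assumes "finite V" and "finite E"
    and "\<forall>e\<in>E. fst (ends e) \<in> V \<and> snd (ends e) \<in> V"
    and "\<forall>v\<in>V. even (deg ends E v)"
  shows "(num_eul_or V ends E)^2 =
           (\<Sum>A\<in>Pow E. num_eul_or V ends A * num_eul_or V ends (E - A)) \<and>
         (num_half V ends E)^2 =
           (\<Sum>A\<in>Pow E. num_half V ends A * num_half V ends (E - A))"
proof -
  have fin: "finite A" if "A \<subseteq> E" for A
    using finite_subset[OF that assms(2)] .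
  have "num_eul_or V ends A = card (balanced_signings V (signed_incidence ends) A)"
    if "A \<subseteq> E" for A
    by (simp add: num_eul_or_def eulerian_orientations_eq_balanced_signings fin that)
  moreover have "num_half V ends A = card (balanced_signings V (incidence ends) A)"
    if "A \<subseteq> E" for A
    by (simp add: card_half_graphs_eq_balanced_signings fin that)
  ultimately show ?thesis
    using card_balanced_signings_square[OF assms(2)] by auto
qed

end
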